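(* For all integers $n\geq 2$ and $m\geq 1$, $\mathrm{mbt}(K_{2n}\Box C_{2m+1})=\Delta(K_{2n}\Box C_{2m+1})+1=2n+2$.
   Context: A book embedding of a graph $G$ consists of a linear ordering of $V(G)$ (the vertices placed on the spine) together with an assignment of each edge to one of a set of pages such that no two edges on the same page cross, i.e. there are no two edges $uv$, $xy$ on the same page with $u<x<v<y$ in the ordering. A book embedding is matching if on every page each vertex is incident with at most one edge of that page. The matching book thickness $\mathrm{mbt}(G)$ is the minimum number of pages over all matching book embeddings of $G$. $\Delta(G)$ denotes the maximum degree of $G$. $K_r$ is the complete graph on $r$ vertices, $C_s$ the cycle on $s$ vertices. The Cartesian product $G\Box B$ has vertex set $V(G)\times V(B)$, with $(u_1,v_1)$ adjacent to $(u_2,v_2)$ iff either $u_1=u_2$ and $v_1v_2\in E(B)$, or $v_1=v_2$ and $u_1u_2\in E(G)$. *)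

theory Defs
  imports Main
begin

type_synonym 'a graph = "'a set \<times> 'a set set"

definition verts :: "'a graph \<Rightarrow> 'a set" where "verts G = fst G"
definition edges :: "'a graph \<Rightarrow> 'a set set" where "edges G = snd G"

definition complete_graph :: "nat \<Rightarrow> nat graph" where
  "complete_graph r = ({0..<r}, {{u, v} | u v. u < r \<and> v < r \<and> u \<noteq> v})"

text \<open>Cycle on s vertices (meaningful for s \<ge> 3).\<close>
definition cycle_graph :: "nat \<Rightarrow> nat graph" where
  "cycle_graph s = ({0..<s}, {{i, (i + 1) mod s} | i. i < s})"

definition cart_prod :: "'a graph \<Rightarrow> 'b graph \<Rightarrow> ('a \<times> 'b) graph" where
  "cart_prod G B = (verts G \<times> verts B,
     {{(u, v1), (u, v2)} | u v1 v2. u \<in> verts G \<and> {v1, v2} \<in> edges B}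
   \<union> {{(u1, v), (u2, v)} | u1 u2 v. v \<in> verts B \<and> {u1, u2} \<in> edges G})"

definition degree :: "'a graph \<Rightarrow> 'a \<Rightarrow> nat" where
  "degree G v = card {e \<in> edges G. v \<in> e}"

definition max_degree :: "'a graph \<Rightarrow> nat" where
  "max_degree G = Max (degree G ` verts G)"

text \<open>A matching book embedding of G with k pages: an injective placement
  ord of the vertices on the spine (a linear ordering) and a page assignment
  of edges to pages 0..k-1, with no two crossing edges on the same page and
  each page a matching.\<close>
definition matching_book_embedding ::
  "'a graph \<Rightarrow> nat \<Rightarrow> ('a \<Rightarrow> nat) \<Rightarrow> ('a set \<Rightarrow> nat) \<Rightarrow> bool" where
  "matching_book_embedding G k ord page \<longleftrightarrow>
     inj_on ord (verts G) \<and>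
     (\<forall>e \<in> edges G. page e < k) \<and>
     (\<forall>u v x y. {u, v} \<in> edges G \<longrightarrow> {x, y} \<in> edges G \<longrightarrow>
        page {u, v} = page {x, y} \<longrightarrow>
        \<not> (ord u < ord x \<and> ord x < ord v \<and> ord v < ord y)) \<and>
     (\<forall>e \<in> edges G. \<forall>f \<in> edges G. e \<noteq> f \<longrightarrow> page e = page f \<longrightarrow> e \<inter> f = {})"

definition mbt :: "'a graph \<Rightarrow> nat" where
  "mbt G = (LEAST k. \<exists>ord page. matching_book_embedding G k ord page)"

end

theory Submission
  imports Defs
begin

text \<open>The product of K_N and C_L is (N + 1)-regular. In a matching book embedding with only N + 1
  pages every page would be a perfect matching, so the vertices strictly between the ends of an
  edge are matched among themselves by its page and are even in number; for a triangle x < y < z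
  on the spine this makes the number of vertices between x and z odd. For odd L there is an
  embedding with N + 2 pages: the copies of K_N occupy consecutive blocks of the spine, alternately
  in increasing and decreasing order, so that the cycle edges between consecutive copies are
  nested, and the edges inside a copy are coloured by the sum of their ends modulo N (or N + 1,
  N + 2 in three special copies), since chords within one block with equal such sums never
  cross.\<close>

definition simple_graph :: "'a graph \<Rightarrow> bool" where
  "simple_graph G \<longleftrightarrow> finite (verts G) \<and>
     (\<forall>e \<in> edges G. \<exists>u v. u \<in> verts G \<and> v \<in> verts G \<and> u \<noteq> v \<and> e = {u, v})"

lemma simple_graph_edgeD:
  assumes "simple_graph G" "{u, v} \<in> edges G"
  shows "u \<in> verts G" "v \<in> verts G" "u \<noteq> v"
proof -
  obtain x y where "x \<in> verts G" "y \<in> verts G" "x \<noteq> y" "{u, v} = {x, y}"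
    using assms unfolding simple_graph_def by blast
  then show "u \<in> verts G" "v \<in> verts G" "u \<noteq> v" by (auto simp: doubleton_eq_iff)
qed

lemma even_card_involution:
  assumes "finite S" "\<And>z. z \<in> S \<Longrightarrow> f z \<in> S \<and> f z \<noteq> z \<and> f (f z) = z"
  shows "even (card S)"
  using assms
proof (induction "card S" arbitrary: S rule: less_induct)
  case less
  show ?case
  proof (cases "S = {}")
    case False
    then obtain z where z: "z \<in> S" by auto
    let ?S' = "S - {z, f z}"
    have pair: "{z, f z} \<subseteq> S" "card {z, f z} = 2" using less.prems(2)[OF z] z by auto
    then have card_S: "card S = card ?S' + 2"
      using card_mono[OF less.prems(1) pair(1)] by (simp add: card_Diff_subset)
    have "f y \<in> ?S' \<and> f y \<noteq> y \<and> f (f y) = y" if y: "y \<in> ?S'" for y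
    proof -
      have "f y \<in> S" "f y \<noteq> y" "f (f y) = y" using less.prems(2) y by auto
      moreover have "f y \<noteq> z" "f y \<noteq> f z" using y \<open>f (f y) = y\<close> less.prems(2)[OF z] by auto
      ultimately show ?thesis by auto
    qed
    then have "even (card ?S')" using less.hyps[of ?S'] card_S less.prems(1) by simp
    then show ?thesis using card_S by simp
  qed simp
qed

lemma matching_book_embeddingD:
  assumes "matching_book_embedding G k ord page"
  shows "inj_on ord (verts G)"
    and "e \<in> edges G \<Longrightarrow> page e < k"
    and "{u, v} \<in> edges G \<Longrightarrow> {x, y} \<in> edges G \<Longrightarrow>
           page {u, v} = page {x, y} \<Longrightarrow> \<not> (ord u < ord x \<and> ord x < ord v \<and> ord v < ord y)"
    and "e \<in> edges G \<Longrightarrow> f \<in> edges G \<Longrightarrow> e \<noteq> f \<Longrightarrow> page e = page f \<Longrightarrow>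
           e \<inter> f = {}"
  using assms unfolding matching_book_embedding_def by blast+

lemma page_inj_on_incident_edges:
  assumes "matching_book_embedding G k ord page"
  shows "inj_on page {e \<in> edges G. v \<in> e}"
  using matching_book_embeddingD(4)[OF assms] unfolding inj_on_def by blast

lemma degree_le_pages:
  assumes "matching_book_embedding G k ord page"
  shows "degree G v \<le> k"
proof -
  have "page ` {e \<in> edges G. v \<in> e} \<subseteq> {..<k}"
    using matching_book_embeddingD(2)[OF assms] by auto
  then have "card {e \<in> edges G. v \<in> e} \<le> card {..<k}"
    by (intro card_inj_on_le[OF page_inj_on_incident_edges[OF assms]]) simp_all
  then show ?thesis by (simp add: degree_def)
qed

lemma pages_at_full_degree_vertex:
  assumes "matching_book_embedding G k ord page" "degree G v = k"
  shows "page ` {e \<in> edges G. v \<in> e} = {..<k}"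
proof (rule card_subset_eq)
  show "page ` {e \<in> edges G. v \<in> e} \<subseteq> {..<k}"
    using matching_book_embeddingD(2)[OF assms(1)] by auto
  show "card (page ` {e \<in> edges G. v \<in> e}) = card {..<k}"
    using card_image[OF page_inj_on_incident_edges[OF assms(1)]] assms(2) by (simp add: degree_def)
qed simp

text \<open>If every vertex has degree equal to the number of pages, every page is a perfect matching;
  so the vertices strictly between the ends of an edge are matched among themselves by its page.\<close>

lemma even_card_under_edge:
  assumes G: "simple_graph G" and emb: "matching_book_embedding G k ord page"
    and regular: "\<And>v. v \<in> verts G \<Longrightarrow> degree G v = k"
    and ab: "{a, b} \<in> edges G" "ord a < ord b"
  shows "even (card {z \<in> verts G. ord a < ord z \<and> ord z < ord b})"
proof -
  define p where "p = page {a, b}"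
  define S where "S = {z \<in> verts G. ord a < ord z \<and> ord z < ord b}"
  define partner where "partner z = (SOME w. {z, w} \<in> edges G \<and> page {z, w} = p)" for z
  note inj = matching_book_embeddingD(1)[OF emb]
    and crossing_free = matching_book_embeddingD(3)[OF emb]
    and matching = matching_book_embeddingD(4)[OF emb]
  have "p < k" using matching_book_embeddingD(2)[OF emb ab(1)] p_def by simp
  have partner: "{z, partner z} \<in> edges G \<and> page {z, partner z} = p" if "z \<in> verts G" for z
  proof -
    have "p \<in> page ` {e \<in> edges G. z \<in> e}"
      using pages_at_full_degree_vertex[OF emb regular[OF that]] \<open>p < k\<close> by blast
    then obtain e where "e \<in> edges G" "z \<in> e" "page e = p" by blast
    with G obtain w where "{z, w} \<in> edges G" "page {z, w} = p"
      unfolding simple_graph_def by (metis insert_commute insertE singletonD)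
    then show ?thesis unfolding partner_def by (metis (mono_tags, lifting) someI_ex)
  qed
  have partner_unique: "w = partner z" if zw: "{z, w} \<in> edges G" "page {z, w} = p" for z w
  proof (rule ccontr)
    assume "w \<noteq> partner z"
    then have "{z, w} \<noteq> {z, partner z}"
      using simple_graph_edgeD(3)[OF G zw(1)] by (auto simp: doubleton_eq_iff)
    moreover note partner[OF simple_graph_edgeD(1)[OF G zw(1)]]
    ultimately have "{z, w} \<inter> {z, partner z} = {}" using matching zw by metis
    then show False by blast
  qed
  have "finite S" using G unfolding S_def simple_graph_def by simp
  moreover have "partner z \<in> S \<and> partner z \<noteq> z \<and> partner (partner z) = z" if z: "z \<in> S" for z
  proof -
    from z have zV: "z \<in> verts G" and between: "ord a < ord z" "ord z < ord b"
      unfolding S_def by auto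
    let ?w = "partner z"
    have zw: "{z, ?w} \<in> edges G" "page {z, ?w} = p" using partner[OF zV] by auto
    have "{z, ?w} \<noteq> {a, b}" using between by (auto simp: doubleton_eq_iff)
    then have "{z, ?w} \<inter> {a, b} = {}" using matching[OF zw(1) ab(1)] zw(2) p_def by simp
    moreover have "?w \<in> verts G" "a \<in> verts G" "b \<in> verts G"
      using simple_graph_edgeD[OF G] zw(1) ab(1) by auto
    ultimately have "ord ?w \<noteq> ord a" "ord ?w \<noteq> ord b"
      using inj_onD[OF inj] by fastforce+
    moreover have "\<not> (ord ?w < ord a \<and> ord a < ord z \<and> ord z < ord b)"
      using crossing_free[of ?w z a b] zw ab(1) p_def by (simp add: insert_commute)
    moreover have "\<not> (ord a < ord z \<and> ord z < ord b \<and> ord b < ord ?w)"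
      using crossing_free[OF ab(1) zw(1)] zw(2) p_def by simp
    ultimately have "?w \<in> S" using between \<open>?w \<in> verts G\<close> unfolding S_def by auto
    moreover have "partner ?w = z"
      using partner_unique[of ?w z] zw by (simp add: insert_commute)
    ultimately show ?thesis using simple_graph_edgeD(3)[OF G zw(1)] by auto
  qed
  ultimately have "even (card S)" by (rule even_card_involution[of S partner])
  then show ?thesis unfolding S_def .
qed

lemma regular_triangle_pages_gt_degree:
  assumes G: "simple_graph G" and emb: "matching_book_embedding G k ord page"
    and regular: "\<And>v. v \<in> verts G \<Longrightarrow> degree G v = d"
    and triangle: "{x, y} \<in> edges G" "{y, z} \<in> edges G" "{x, z} \<in> edges G"
  shows "d < k"
proof (rule ccontr)
  assume "\<not> d < k"
  have "d \<le> k" using degree_le_pages[OF emb] regular simple_graph_edgeD[OF G triangle(1)] by metis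
  with \<open>\<not> d < k\<close> have regular_k: "\<And>v. v \<in> verts G \<Longrightarrow> degree G v = k" using regular by simp
  note inj = matching_book_embeddingD(1)[OF emb]
  define S where "S a b = {z \<in> verts G. ord a < ord z \<and> ord z < ord b}" for a b
  have even_S: "even (card (S a b))" if "{a, b} \<in> edges G" "ord a < ord b" for a b
    unfolding S_def using even_card_under_edge[OF G emb regular_k that] .
  have sorted_triangle_impossible: False
    if "{a, b} \<in> edges G" "{b, c} \<in> edges G" "{a, c} \<in> edges G" "ord a < ord b" "ord b < ord c"
    for a b c
  proof -
    have "b \<in> verts G" using simple_graph_edgeD[OF G that(1)] by simp
    then have "ord w \<noteq> ord b" if "w \<in> verts G" "w \<noteq> b" for w
      using inj_onD[OF inj] that by blast
    then have "S a c = S a b \<union> ({b} \<union> S b c)"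
      using that(4,5) \<open>b \<in> verts G\<close> unfolding S_def by (auto simp: neq_iff)
    moreover have "finite (S u v)" for u v using G unfolding S_def simple_graph_def by simp
    moreover have "S a b \<inter> ({b} \<union> S b c) = {}" "{b} \<inter> S b c = {}" unfolding S_def by auto
    ultimately have "card (S a c) = card (S a b) + 1 + card (S b c)"
      by (simp add: card_Un_disjoint)
    then show False using even_S that by (metis even_add odd_one order.strict_trans)
  qed
  have "ord x \<noteq> ord y" "ord y \<noteq> ord z" "ord x \<noteq> ord z"
    using simple_graph_edgeD[OF G triangle(1)] simple_graph_edgeD[OF G triangle(2)]
      simple_graph_edgeD[OF G triangle(3)] inj_on_contraD[OF inj] by blast+
  then show False
    using sorted_triangle_impossible[of x y z] sorted_triangle_impossible[of x z y]
      sorted_triangle_impossible[of y x z] sorted_triangle_impossible[of y z x]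
      sorted_triangle_impossible[of z x y] sorted_triangle_impossible[of z y x] triangle
    by (auto simp: insert_commute neq_iff)
qed

lemma complete_graph_edge_iff:
  "{u, w} \<in> edges (complete_graph N) \<longleftrightarrow> u < N \<and> w < N \<and> u \<noteq> w"
  by (auto simp: edges_def complete_graph_def doubleton_eq_iff)

locale complete_cycle_product =
  fixes N L :: nat
  assumes N_ge_3: "3 \<le> N" and L_ge_3: "3 \<le> L"
begin

definition KC :: "(nat \<times> nat) graph" where
  "KC = cart_prod (complete_graph N) (cycle_graph L)"

fun adj :: "nat \<times> nat \<Rightarrow> nat \<times> nat \<Rightarrow> bool" where
  "adj (u, j) (w, k) \<longleftrightarrow> u < N \<and> w < N \<and> j < L \<and> k < L \<and>
     (j = k \<and> u \<noteq> w \<or> u = w \<and> (k = (j + 1) mod L \<or> j = (k + 1) mod L))"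

lemma Suc_mod_neq: "k < L \<Longrightarrow> Suc k mod L \<noteq> k"
  using L_ge_3 by (cases "Suc k = L") auto

lemma adj_sym: "adj a b \<Longrightarrow> adj b a"
  by (cases a; cases b) auto

lemma adj_irrefl: "adj a b \<Longrightarrow> a \<noteq> b"
  using Suc_mod_neq by (cases a; cases b) fastforce

lemma verts_KC: "verts KC = {0..<N} \<times> {0..<L}"
  by (simp add: KC_def cart_prod_def verts_def complete_graph_def cycle_graph_def)

lemma adj_in_verts: "adj a b \<Longrightarrow> a \<in> verts KC \<and> b \<in> verts KC"
  by (cases a; cases b) (auto simp: verts_KC)

lemma cycle_graph_edge_iff:
  "{j, k} \<in> edges (cycle_graph L) \<longleftrightarrow> j < L \<and> k < L \<and> (k = (j + 1) mod L \<or> j = (k + 1) mod L)"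
proof
  assume "{j, k} \<in> edges (cycle_graph L)"
  then obtain i where "i < L" "{j, k} = {i, (i + 1) mod L}"
    by (auto simp: edges_def cycle_graph_def)
  moreover have "(i + 1) mod L < L" using L_ge_3 by simp
  ultimately show "j < L \<and> k < L \<and> (k = (j + 1) mod L \<or> j = (k + 1) mod L)"
    by (auto simp: doubleton_eq_iff)
next
  assume "j < L \<and> k < L \<and> (k = (j + 1) mod L \<or> j = (k + 1) mod L)"
  then have "\<exists>i. {j, k} = {i, (i + 1) mod L} \<and> i < L" by (auto simp: insert_commute)
  then show "{j, k} \<in> edges (cycle_graph L)" by (auto simp: edges_def cycle_graph_def)
qed

lemma edges_KC_iff: "e \<in> edges KC \<longleftrightarrow> (\<exists>a b. e = {a, b} \<and> adj a b)"
proof -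
  have "e \<in> edges KC \<longleftrightarrow>
      (\<exists>u j k. e = {(u, j), (u, k)} \<and> u < N \<and> {j, k} \<in> edges (cycle_graph L)) \<or>
      (\<exists>u w j. e = {(u, j), (w, j)} \<and> j < L \<and> {u, w} \<in> edges (complete_graph N))"
    by (auto simp: KC_def cart_prod_def edges_def[of "(_, _)"] verts_def
        complete_graph_def cycle_graph_def)
  also have "\<dots> \<longleftrightarrow> (\<exists>a b. e = {a, b} \<and> adj a b)"
    unfolding cycle_graph_edge_iff complete_graph_edge_iff
    using Suc_mod_neq by (auto 0 4 simp: Suc_eq_plus1[symmetric])
  finally show ?thesis .
qed

lemma doubleton_in_edges_KC_iff: "{a, b} \<in> edges KC \<longleftrightarrow> adj a b"
proof
  assume "{a, b} \<in> edges KC"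
  then obtain c d where "{a, b} = {c, d}" "adj c d" using edges_KC_iff by blast
  then show "adj a b" using adj_sym by (metis doubleton_eq_iff)
qed (use edges_KC_iff in blast)

lemma simple_graph_KC: "simple_graph KC"
proof -
  have "\<exists>u v. u \<in> verts KC \<and> v \<in> verts KC \<and> u \<noteq> v \<and> e = {u, v}" if "e \<in> edges KC" for e
    using that adj_in_verts adj_irrefl unfolding edges_KC_iff by blast
  then show ?thesis unfolding simple_graph_def by (simp add: verts_KC)
qed

lemma add1_mod_L: "k < L \<Longrightarrow> (k + 1) mod L = (if k + 1 < L then k + 1 else 0)"
  by (cases "k + 1 = L") auto

lemma pred_mod_L: "j < L \<Longrightarrow> (j + L - 1) mod L = (if j = 0 then L - 1 else j - 1)"
  using L_ge_3 by (cases j) auto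

lemma eq_succ_mod_iff:
  assumes "j < L" "k < L"
  shows "j = (k + 1) mod L \<longleftrightarrow> k = (j + L - 1) mod L"
  unfolding add1_mod_L[OF assms(2)] pred_mod_L[OF assms(1)] using L_ge_3 assms by auto

lemma adj_iff:
  assumes "x < N" "j < L"
  shows "adj (x, j) (w, k) \<longleftrightarrow> w < N \<and> k < L \<and>
    (k = j \<and> w \<noteq> x \<or> w = x \<and> (k = (j + 1) mod L \<or> k = (j + L - 1) mod L))"
  using assms eq_succ_mod_iff[OF assms(2)] by auto

lemma next_neq: "j < L \<Longrightarrow> (j + 1) mod L \<noteq> j"
  using Suc_mod_neq by simp

lemma prev_neq: "j < L \<Longrightarrow> (j + L - 1) mod L \<noteq> j"
  using pred_mod_L L_ge_3 by auto

lemma next_neq_prev: "j < L \<Longrightarrow> (j + 1) mod L \<noteq> (j + L - 1) mod L"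
  using pred_mod_L add1_mod_L L_ge_3 by auto

lemma neighbours_KC:
  assumes "x < N" "j < L"
  shows "{w. adj (x, j) w} =
    (\<lambda>w. (w, j)) ` ({0..<N} - {x}) \<union> {(x, (j + 1) mod L), (x, (j + L - 1) mod L)}"
proof -
  have "(j + 1) mod L < L" "(j + L - 1) mod L < L" using L_ge_3 by auto
  then show ?thesis using assms by (auto simp del: adj.simps simp: adj_iff[OF assms])
qed

lemma card_neighbours_KC:
  assumes "x < N" "j < L"
  shows "card {w. adj (x, j) w} = N + 1"
proof -
  let ?clique = "(\<lambda>w. (w, j)) ` ({0..<N} - {x})"
  let ?cycle = "{(x, (j + 1) mod L), (x, (j + L - 1) mod L)}"
  have "card ?clique = N - 1"
    using assms(1) by (subst card_image) (auto simp: inj_on_def)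
  moreover have "card ?cycle = 2"
    using next_neq_prev[OF assms(2)] by simp
  moreover have "?clique \<inter> ?cycle = {}"
    using next_neq[OF assms(2)] prev_neq[OF assms(2)] by auto
  ultimately have "card (?clique \<union> ?cycle) = N - 1 + 2"
    by (subst card_Un_disjoint) auto
  then show ?thesis unfolding neighbours_KC[OF assms] using N_ge_3 by simp
qed

lemma incident_edges_KC: "{e \<in> edges KC. v \<in> e} = (\<lambda>w. {v, w}) ` {w. adj v w}"
proof (intro equalityI subsetI)
  fix e assume "e \<in> {e \<in> edges KC. v \<in> e}"
  then obtain a b where "e = {a, b}" "adj a b" "v \<in> e" using edges_KC_iff by auto
  then obtain w where "adj v w" "e = {v, w}" using adj_sym by (metis insert_commute insertE singletonD)
  then show "e \<in> (\<lambda>w. {v, w}) ` {w. adj v w}" by blast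
qed (auto simp: doubleton_in_edges_KC_iff)

lemma degree_KC: "v \<in> verts KC \<Longrightarrow> degree KC v = N + 1"
proof -
  assume "v \<in> verts KC"
  then obtain x j where v: "v = (x, j)" "x < N" "j < L" by (auto simp: verts_KC)
  have "inj_on (\<lambda>w. {v, w}) {w. adj v w}" by (auto simp: inj_on_def doubleton_eq_iff)
  then have "card ((\<lambda>w. {v, w}) ` {w. adj v w}) = card {w. adj v w}" by (rule card_image)
  then show ?thesis unfolding degree_def incident_edges_KC using card_neighbours_KC v by simp
qed

lemma max_degree_KC: "max_degree KC = N + 1"
proof -
  have "verts KC \<noteq> {}" using N_ge_3 L_ge_3 by (auto simp: verts_KC)
  then have "degree KC ` verts KC = {N + 1}" using degree_KC by auto
  then show ?thesis unfolding max_degree_def by simp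
qed

lemma matching_book_embedding_KC_pages_ge:
  assumes "matching_book_embedding KC k ord page"
  shows "N + 2 \<le> k"
proof -
  have "{(0, 0), (1, 0)} \<in> edges KC" "{(1, 0), (2, 0)} \<in> edges KC" "{(0, 0), (2, 0)} \<in> edges KC"
    unfolding doubleton_in_edges_KC_iff using N_ge_3 L_ge_3 by auto
  then show ?thesis
    using regular_triangle_pages_gt_degree[OF simple_graph_KC assms degree_KC] by fastforce
qed

end

definition crossing :: "nat \<Rightarrow> nat \<Rightarrow> nat \<Rightarrow> nat \<Rightarrow> bool" where
  "crossing p q r s \<longleftrightarrow>
     p < r \<and> r < q \<and> (s < p \<or> q < s) \<or> q < r \<and> r < p \<and> (s < q \<or> p < s) \<or>
     p < s \<and> s < q \<and> (r < p \<or> q < r) \<or> q < s \<and> s < p \<and> (r < q \<or> p < r)"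

lemma crossing_commute: "crossing p q r s \<Longrightarrow> crossing r s p q"
  unfolding crossing_def by presburger

lemma crossing_swap_left: "crossing p q r s \<longleftrightarrow> crossing q p r s"
  unfolding crossing_def by presburger

lemma crossing_swap_right: "crossing p q r s \<longleftrightarrow> crossing p q s r"
  unfolding crossing_def by presburger

lemma not_crossing_self: "\<not> crossing p q p q"
  unfolding crossing_def by presburger

lemma not_crossing_outside:
  assumes "r < p \<and> r < q \<or> p < r \<and> q < r" "s < p \<and> s < q \<or> p < s \<and> q < s"
  shows "\<not> crossing p q r s"
  using assms
  unfolding crossing_def by linarith

lemma not_crossing_before:
  "p < r \<Longrightarrow> q < r \<Longrightarrow> p < s \<Longrightarrow> q < s \<Longrightarrow> \<not> crossing p q r s"
  by (rule not_crossing_outside) auto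

lemma not_crossing_after:
  "r < p \<Longrightarrow> r < q \<Longrightarrow> s < p \<Longrightarrow> s < q \<Longrightarrow> \<not> crossing p q r s"
  by (rule not_crossing_outside) auto

lemma not_crossing_enclosing:
  "r < p \<Longrightarrow> r < q \<Longrightarrow> p < s \<Longrightarrow> q < s \<Longrightarrow> \<not> crossing p q r s"
  by (rule not_crossing_outside) auto

lemma not_crossing_nested:
  "p < r \<Longrightarrow> r < q \<Longrightarrow> p < s \<Longrightarrow> s < q \<Longrightarrow> \<not> crossing p q r s"
  unfolding crossing_def by linarith

lemma not_crossing_sums_apart:
  fixes p q r s B M :: nat
  assumes "B \<le> p" "B \<le> q" "B \<le> r" "B \<le> s" "p < B + M" "q < B + M" "r < B + M" "s < B + M"
    and "p + q = r + s \<or> p + q + M \<le> r + s \<or> r + s + M \<le> p + q"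
  shows "\<not> crossing p q r s"
proof
  assume "crossing p q r s"
  then show False using assms(9) unfolding crossing_def by (elim disjE conjE; use assms(1-8) in linarith)
qed

lemma mod_eq_imp_eq_or_apart:
  fixes a b M :: nat
  assumes "a mod M = b mod M"
  shows "a = b \<or> a + M \<le> b \<or> b + M \<le> a"
proof (cases "a \<le> b")
  case True
  then have "M dvd b - a" using assms mod_eq_dvd_iff_nat[of a b M] by simp
  then show ?thesis using True by (cases "b - a = 0") (auto dest: dvd_imp_le)
next
  case False
  then have "M dvd a - b" using assms mod_eq_dvd_iff_nat[of b a M] by simp
  then show ?thesis using False by (cases "a - b = 0") (auto dest: dvd_imp_le)
qed

lemma mod_less_double: "(a :: nat) < 2 * M \<Longrightarrow> a mod M = (if a < M then a else a - M)"
  by (simp add: le_mod_geq)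

lemma add_le_mult_of_less: "j < k \<Longrightarrow> j * N + N \<le> k * (N :: nat)"
  using mult_le_mono1[of "Suc j" k N] by simp

locale odd_complete_cycle_product = complete_cycle_product +
  assumes odd_L: "odd L"
begin

lemma even_L_minus_1: "even (L - 1)"
  using odd_L L_ge_3 by simp

text \<open>The spine lists the layers (copies of K_N) in the order 0, 1, ..., L - 1; layer j occupies
  the block [jN, jN + N), its vertices in increasing order for even j and in decreasing order for
  odd j, so that the cycle edges between two consecutive layers are nested.\<close>

definition spine_pos :: "nat \<times> nat \<Rightarrow> nat" where
  "spine_pos v = (case v of (u, j) \<Rightarrow> if even j then j * N + u else j * N + (N - 1 - u))"

lemma spine_pos_even: "even j \<Longrightarrow> spine_pos (u, j) = j * N + u"
  by (simp add: spine_pos_def)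

lemma spine_pos_odd: "odd j \<Longrightarrow> u < N \<Longrightarrow> spine_pos (u, j) + u + 1 = j * N + N"
  by (simp add: spine_pos_def)

lemma spine_pos_ge: "j * N \<le> spine_pos (u, j)"
  by (simp add: spine_pos_def)

lemma spine_pos_less: "u < N \<Longrightarrow> spine_pos (u, j) < j * N + N"
  by (simp add: spine_pos_def)

lemma spine_pos_less_iff:
  "u < N \<Longrightarrow> w < N \<Longrightarrow> spine_pos (u, j) < spine_pos (w, j) \<longleftrightarrow> (if even j then u < w else w < u)"
  by (auto simp: spine_pos_def)

lemma spine_pos_first_layer: "spine_pos (x, 0) = x"
  by (simp add: spine_pos_even)

lemma spine_pos_last_layer: "spine_pos (x, L - 1) = (L - 1) * N + x"
  using even_L_minus_1 by (simp add: spine_pos_even)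

lemma inj_on_spine_pos: "inj_on spine_pos (verts KC)"
proof (rule inj_onI)
  fix a b assume "a \<in> verts KC" "b \<in> verts KC" and eq: "spine_pos a = spine_pos b"
  then obtain u j w k where ab: "a = (u, j)" "b = (w, k)" "u < N" "w < N" by (auto simp: verts_KC)
  have "j = k"
  proof (rule ccontr)
    assume "j \<noteq> k"
    then have "j * N + N \<le> k * N \<or> k * N + N \<le> j * N"
      using add_le_mult_of_less by (meson linorder_neqE_nat)
    then show False
      using eq ab spine_pos_ge[of j u] spine_pos_ge[of k w] spine_pos_less[of u j] spine_pos_less[of w k]
      by auto
  qed
  then have "u = w" using eq ab spine_pos_less_iff[of u w j] spine_pos_less_iff[of w u j]
    by (cases "even j") auto
  then show "a = b" using ab \<open>j = k\<close> by simp
qed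

text \<open>A cycle edge between the layers k and k + 1 with k \<ge> 1 goes to
  page 0 or N + 1 according to the parity of k; the edges (x, 0)(x, 1) and (x, 0)(x, L - 1) go to
  the pages x + 1 and x + 2. The clique edge uw of layer j goes to a page determined by u + w modulo
  N (or N + 1, N + 2 in the layers 0, 1, L - 1, where the pages x + 1 and x + 2 are in use), shifted
  so that it avoids the pages of the cycle edges at every x between u and w.\<close>

definition clique_page :: "nat \<Rightarrow> nat \<Rightarrow> nat" where
  "clique_page j s =
    (if j = 0 then (s + 3) mod (N + 2)
     else if j = 1 then (s + 1) mod (N + 1) + 1
     else if j = L - 1 then (s + 2) mod (N + 1) + 1
     else s mod N + 1)"

definition cycle_page :: "nat \<Rightarrow> nat \<Rightarrow> nat \<Rightarrow> nat" where
  "cycle_page j k x =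
    (if j = 0 \<and> k = 1 then x + 1
     else if j = 0 \<and> k = L - 1 then x + 2
     else if odd j then 0 else N + 1)"

fun page_of :: "nat \<times> nat \<Rightarrow> nat \<times> nat \<Rightarrow> nat" where
  "page_of (u, j) (w, k) =
    (if j = k then clique_page j (u + w) else cycle_page (min j k) (max j k) (min u w))"

lemma page_of_commute: "page_of a b = page_of b a"
  by (cases a; cases b) (simp add: add.commute min.commute max.commute)

lemma page_of_same_layer: "page_of (u, j) (w, j) = clique_page j (u + w)"
  by simp

definition edge_page :: "(nat \<times> nat) set \<Rightarrow> nat" where
  "edge_page e = (THE p. \<exists>a b. e = {a, b} \<and> p = page_of a b)"

lemma edge_page_eq: "edge_page {a, b} = page_of a b"
  unfolding edge_page_def
proof (rule the_equality)
  fix p assume "\<exists>c d. {a, b} = {c, d} \<and> p = page_of c d"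
  then show "p = page_of a b" using page_of_commute by (auto simp del: page_of.simps simp: doubleton_eq_iff)
qed blast

lemma clique_page_less: "clique_page j s < N + 2"
proof -
  have "s mod N < N" using N_ge_3 by simp
  then show ?thesis by (simp add: clique_page_def)
qed

lemma page_of_less: "adj a b \<Longrightarrow> page_of a b < N + 2"
  using clique_page_less by (cases a; cases b) (auto simp: cycle_page_def)

lemma clique_page_eq_imp_sums_apart:
  assumes "clique_page j s = clique_page j s'"
  shows "s = s' \<or> s + N \<le> s' \<or> s' + N \<le> s"
proof -
  have "(s + 3) mod (N + 2) = (s' + 3) mod (N + 2) \<or> (s + 1) mod (N + 1) = (s' + 1) mod (N + 1) \<or>
      (s + 2) mod (N + 1) = (s' + 2) mod (N + 1) \<or> s mod N = s' mod N"
    using assms by (auto simp: clique_page_def split: if_splits)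
  then show ?thesis
    using mod_eq_imp_eq_or_apart[of "s + 3" "N + 2" "s' + 3"]
      mod_eq_imp_eq_or_apart[of "s + 1" "N + 1" "s' + 1"]
      mod_eq_imp_eq_or_apart[of "s + 2" "N + 1" "s' + 2"] mod_eq_imp_eq_or_apart[of s N s']
    by auto
qed

lemma page_of_step:
  "k + 1 < L \<Longrightarrow> page_of (x, k) (x, k + 1) = (if k = 0 then x + 1 else if odd k then 0 else N + 1)"
  by (auto simp: cycle_page_def)

lemma page_of_wrap: "page_of (x, 0) (x, L - 1) = x + 2"
  using L_ge_3 by (simp add: cycle_page_def)

lemma page_of_next:
  assumes "j < L"
  shows "page_of (x, j) (x, (j + 1) mod L) =
    (if j = L - 1 then x + 2 else if j = 0 then x + 1 else if odd j then 0 else N + 1)"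
proof (cases "j = L - 1")
  case True
  then show ?thesis using L_ge_3 by (simp add: cycle_page_def)
next
  case False
  then have "(j + 1) mod L = j + 1" using assms by simp
  then show ?thesis using False L_ge_3 by (auto simp: cycle_page_def)
qed

lemma page_of_prev:
  assumes "j < L"
  shows "page_of (x, j) (x, (j + L - 1) mod L) =
    (if j = 0 then x + 2 else if j = 1 then x + 1 else if odd (j - 1) then 0 else N + 1)"
  using L_ge_3 pred_mod_L[OF assms] by (auto simp: cycle_page_def)

lemma page_of_next_neq_prev:
  "j < L \<Longrightarrow> page_of (x, j) (x, (j + 1) mod L) \<noteq> page_of (x, j) (x, (j + L - 1) mod L)"
  unfolding page_of_next page_of_prev using odd_L L_ge_3 by auto

lemma clique_page_neq_cycle_pages:
  assumes "u < N" "w < N" "u \<noteq> w" "j < L" "u \<le> x \<and> x \<le> w \<or> w \<le> x \<and> x \<le> u"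
  shows "clique_page j (u + w) \<noteq> page_of (x, j) (x, (j + 1) mod L)"
    and "clique_page j (u + w) \<noteq> page_of (x, j) (x, (j + L - 1) mod L)"
proof -
  have "u + w + 3 \<le> 2 * N" using assms by linarith
  then have "clique_page j (u + w) \<notin>
      {page_of (x, j) (x, (j + 1) mod L), page_of (x, j) (x, (j + L - 1) mod L)}"
    unfolding page_of_next[OF assms(4)] page_of_prev[OF assms(4)] clique_page_def
    using assms(1,2,5) even_L_minus_1 L_ge_3 by (auto simp: mod_less_double split: if_splits)
  then show "clique_page j (u + w) \<noteq> page_of (x, j) (x, (j + 1) mod L)"
    and "clique_page j (u + w) \<noteq> page_of (x, j) (x, (j + L - 1) mod L)" by auto
qed

lemma page_of_inj_at_vertex:
  assumes "adj z p" "adj z q" "p \<noteq> q"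
  shows "page_of z p \<noteq> page_of z q"
proof -
  obtain x j where z: "z = (x, j)" "x < N" "j < L"
    using adj_in_verts[OF assms(1)] by (auto simp: verts_KC)
  let ?clique = "(\<lambda>w. (w, j)) ` ({0..<N} - {x})"
  let ?cycle = "{(x, (j + 1) mod L), (x, (j + L - 1) mod L)}"
  have pq: "p \<in> ?clique \<union> ?cycle" "q \<in> ?clique \<union> ?cycle"
    using neighbours_KC[OF z(2,3)] assms z by auto
  have clique_clique: "page_of z c \<noteq> page_of z c'" if "c \<in> ?clique" "c' \<in> ?clique" "c \<noteq> c'" for c c'
    using that z by (auto dest!: clique_page_eq_imp_sums_apart)
  have clique_cycle: "page_of z c \<noteq> page_of z c'" if c: "c \<in> ?clique" and c': "c' \<in> ?cycle" for c c'
  proof -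
    obtain w where w: "c = (w, j)" "w < N" "w \<noteq> x" using c by force
    have "x \<le> x \<and> x \<le> w \<or> w \<le> x \<and> x \<le> x" by linarith
    from clique_page_neq_cycle_pages[OF z(2) w(2) not_sym[OF w(3)] z(3) this] show ?thesis
      using c' z w(1) by (auto simp del: page_of.simps simp: page_of_same_layer)
  qed
  have cycle_clique: "page_of z c' \<noteq> page_of z c" if "c \<in> ?clique" "c' \<in> ?cycle" for c c'
    using clique_cycle[OF that] by (rule not_sym)
  have cycle_cycle: "page_of z c \<noteq> page_of z c'" if "c \<in> ?cycle" "c' \<in> ?cycle" "c \<noteq> c'" for c c'
  proof -
    have "c = (x, (j + 1) mod L) \<and> c' = (x, (j + L - 1) mod L) \<or>
        c = (x, (j + L - 1) mod L) \<and> c' = (x, (j + 1) mod L)"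
      using that by blast
    then show ?thesis using page_of_next_neq_prev[OF z(3), of x] z(1) by metis
  qed
  consider "p \<in> ?clique" "q \<in> ?clique" | "p \<in> ?clique" "q \<in> ?cycle"
    | "p \<in> ?cycle" "q \<in> ?clique" | "p \<in> ?cycle" "q \<in> ?cycle"
    using pq by blast
  then show ?thesis
  proof cases
    case 1 show ?thesis by (rule clique_clique[OF 1 assms(3)])
  next
    case 2 show ?thesis by (rule clique_cycle[OF 2])
  next
    case 3 show ?thesis by (rule cycle_clique[OF 3(2,1)])
  next
    case 4 show ?thesis by (rule cycle_cycle[OF 4 assms(3)])
  qed
qed

lemma spine_pos_outside_clique_edge:
  assumes "u < N" "w < N" "u \<noteq> w" "j < L" "x < N"
    and "clique_page j (u + w) = page_of (x, j) (x, (j + 1) mod L) \<or>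
      clique_page j (u + w) = page_of (x, j) (x, (j + L - 1) mod L)"
  shows "spine_pos (x, j) < spine_pos (u, j) \<and> spine_pos (x, j) < spine_pos (w, j) \<or>
    spine_pos (u, j) < spine_pos (x, j) \<and> spine_pos (w, j) < spine_pos (x, j)"
proof -
  have "x < u \<and> x < w \<or> u < x \<and> w < x"
    using clique_page_neq_cycle_pages[OF assms(1-4), of x] assms(6) by fastforce
  then show ?thesis
    using assms(1,2,5) spine_pos_less_iff[of x u j] spine_pos_less_iff[of x w j]
      spine_pos_less_iff[of u x j] spine_pos_less_iff[of w x j]
    by (cases "even j") auto
qed

lemma clique_clique_no_crossing:
  assumes "u < N" "w < N" "x < N" "y < N"
    and "page_of (u, j) (w, j) = page_of (x, k) (y, k)"
  shows "\<not> crossing (spine_pos (u, j)) (spine_pos (w, j)) (spine_pos (x, k)) (spine_pos (y, k))"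
proof (cases "j = k")
  case False
  have bounds: "j * N \<le> spine_pos (u, j)" "j * N \<le> spine_pos (w, j)"
    "k * N \<le> spine_pos (x, k)" "k * N \<le> spine_pos (y, k)"
    "spine_pos (u, j) < j * N + N" "spine_pos (w, j) < j * N + N"
    "spine_pos (x, k) < k * N + N" "spine_pos (y, k) < k * N + N"
    using spine_pos_ge spine_pos_less assms(1-4) by auto
  from False consider "j * N + N \<le> k * N" | "k * N + N \<le> j * N"
    using add_le_mult_of_less by (meson linorder_neqE_nat)
  then show ?thesis
  proof cases
    case 1 then show ?thesis using bounds by (intro not_crossing_before) linarith+
  next
    case 2 then show ?thesis using bounds by (intro not_crossing_after) linarith+
  qed
next
  case True
  have apart: "u + w = x + y \<or> u + w + N \<le> x + y \<or> x + y + N \<le> u + w"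
    using True assms(5) clique_page_eq_imp_sums_apart by simp
  have sums: "spine_pos (u, j) + spine_pos (w, j) = spine_pos (x, j) + spine_pos (y, j) \<or>
      spine_pos (u, j) + spine_pos (w, j) + N \<le> spine_pos (x, j) + spine_pos (y, j) \<or>
      spine_pos (x, j) + spine_pos (y, j) + N \<le> spine_pos (u, j) + spine_pos (w, j)"
  proof (cases "even j")
    case True
    then show ?thesis using apart unfolding spine_pos_even[OF True] by linarith
  next
    case False
    then show ?thesis using apart spine_pos_odd[OF False assms(1)] spine_pos_odd[OF False assms(2)]
        spine_pos_odd[OF False assms(3)] spine_pos_odd[OF False assms(4)] by linarith
  qed
  show ?thesis
    unfolding True[symmetric]
    by (rule not_crossing_sums_apart[OF spine_pos_ge spine_pos_ge spine_pos_ge spine_pos_ge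
          spine_pos_less spine_pos_less spine_pos_less spine_pos_less sums])
      (use assms(1-4) in simp_all)
qed

lemma clique_step_no_crossing:
  assumes "u < N" "w < N" "x < N" "u \<noteq> w" "j < L" "k + 1 < L"
    and "page_of (u, j) (w, j) = page_of (x, k) (x, k + 1)"
  shows "\<not> crossing (spine_pos (u, j)) (spine_pos (w, j)) (spine_pos (x, k)) (spine_pos (x, k + 1))"
proof -
  have bounds: "j * N \<le> spine_pos (u, j)" "j * N \<le> spine_pos (w, j)"
    "spine_pos (u, j) < j * N + N" "spine_pos (w, j) < j * N + N"
    "k * N \<le> spine_pos (x, k)" "spine_pos (x, k) < k * N + N"
    "k * N + N \<le> spine_pos (x, k + 1)" "spine_pos (x, k + 1) < k * N + N + N"
    using spine_pos_ge[of j] spine_pos_ge[of k x] spine_pos_ge[of "k + 1" x]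
      spine_pos_less[of _ j] spine_pos_less[of x k] spine_pos_less[of x "k + 1"] assms(1-3)
    by (auto simp: algebra_simps)
  consider "j < k" | "j = k" | "j = k + 1" | "k + 1 < j" by linarith
  then show ?thesis
  proof cases
    case 1
    then have "j * N + N \<le> k * N" by (rule add_le_mult_of_less)
    then show ?thesis using bounds by (intro not_crossing_before) linarith+
  next
    case 2
    then have "clique_page j (u + w) = page_of (x, j) (x, (j + 1) mod L)"
      using assms(6,7) by simp
    then have "spine_pos (x, j) < spine_pos (u, j) \<and> spine_pos (x, j) < spine_pos (w, j) \<or>
        spine_pos (u, j) < spine_pos (x, j) \<and> spine_pos (w, j) < spine_pos (x, j)"
      using spine_pos_outside_clique_edge assms by blast
    then show ?thesis using bounds 2 by (intro not_crossing_outside) auto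
  next
    case 3
    then have "(j + L - 1) mod L = k" using pred_mod_L[OF assms(5)] by simp
    then have "clique_page j (u + w) = page_of (x, j) (x, (j + L - 1) mod L)"
      using assms(7) 3 page_of_commute[of "(x, k)"] by (simp del: page_of.simps) simp
    then have "spine_pos (x, j) < spine_pos (u, j) \<and> spine_pos (x, j) < spine_pos (w, j) \<or>
        spine_pos (u, j) < spine_pos (x, j) \<and> spine_pos (w, j) < spine_pos (x, j)"
      using spine_pos_outside_clique_edge assms by blast
    then show ?thesis using bounds 3 by (intro not_crossing_outside) (auto simp: algebra_simps)
  next
    case 4
    then have "(k + 1) * N + N \<le> j * N" by (rule add_le_mult_of_less)
    then show ?thesis using bounds by (intro not_crossing_after) (simp_all add: algebra_simps)
  qed
qed

lemma clique_wrap_no_crossing: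
  assumes "u < N" "w < N" "x < N" "u \<noteq> w" "j < L"
    and "page_of (u, j) (w, j) = page_of (x, 0) (x, L - 1)"
  shows "\<not> crossing (spine_pos (u, j)) (spine_pos (w, j)) (spine_pos (x, 0)) (spine_pos (x, L - 1))"
proof -
  have bounds: "j * N \<le> spine_pos (u, j)" "j * N \<le> spine_pos (w, j)"
    "spine_pos (u, j) < j * N + N" "spine_pos (w, j) < j * N + N"
    using spine_pos_ge[of j] spine_pos_less[of _ j] assms(1,2) by auto
  have first_block: "N \<le> (L - 1) * N" using add_le_mult_of_less[of 0 "L - 1" N] L_ge_3 by simp
  note ends = spine_pos_first_layer[of x] spine_pos_last_layer[of x]
  consider "j = 0" | "j = L - 1" | "0 < j" "j < L - 1" using assms(5) by linarith
  then show ?thesis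
  proof cases
    case 1
    then have "(j + L - 1) mod L = L - 1" using L_ge_3 by simp
    then have "clique_page j (u + w) = page_of (x, j) (x, (j + L - 1) mod L)"
      using assms(6) 1 by simp
    then have "spine_pos (x, j) < spine_pos (u, j) \<and> spine_pos (x, j) < spine_pos (w, j) \<or>
        spine_pos (u, j) < spine_pos (x, j) \<and> spine_pos (w, j) < spine_pos (x, j)"
      using spine_pos_outside_clique_edge assms by blast
    moreover have "spine_pos (u, j) < spine_pos (x, L - 1) \<and> spine_pos (w, j) < spine_pos (x, L - 1)"
      using bounds(3,4) ends(2) first_block unfolding 1 by (intro conjI; linarith)
    ultimately show ?thesis using 1 by (intro not_crossing_outside) auto
  next
    case 2
    then have "(j + 1) mod L = 0" using L_ge_3 by simp
    then have "clique_page j (u + w) = page_of (x, j) (x, (j + 1) mod L)"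
      using assms(6) 2 page_of_commute[of "(x, 0)"] by (simp del: page_of.simps) simp
    then have "spine_pos (x, j) < spine_pos (u, j) \<and> spine_pos (x, j) < spine_pos (w, j) \<or>
        spine_pos (u, j) < spine_pos (x, j) \<and> spine_pos (w, j) < spine_pos (x, j)"
      using spine_pos_outside_clique_edge assms by blast
    moreover have "spine_pos (x, 0) < spine_pos (u, j) \<and> spine_pos (x, 0) < spine_pos (w, j)"
      using bounds(1,2) ends(1) first_block assms(3) unfolding 2 by (intro conjI; linarith)
    ultimately show ?thesis using 2 by (intro not_crossing_outside) auto
  next
    case 3
    have "N \<le> j * N" "j * N + N \<le> (L - 1) * N"
      using add_le_mult_of_less[of 0 j N] add_le_mult_of_less[of j "L - 1" N] 3 by simp_all
    then show ?thesis using bounds ends assms(3) by (intro not_crossing_enclosing) linarith+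
  qed
qed

lemma step_step_no_crossing:
  assumes "x < N" "y < N" "k + 1 < L" "k' + 1 < L"
    and "page_of (x, k) (x, k + 1) = page_of (y, k') (y, k' + 1)"
  shows "\<not> crossing (spine_pos (x, k)) (spine_pos (x, k + 1)) (spine_pos (y, k')) (spine_pos (y, k' + 1))"
proof -
  have pages: "(if k = 0 then x + 1 else if odd k then 0 else N + 1) =
      (if k' = 0 then y + 1 else if odd k' then 0 else N + 1)"
    using assms(5) page_of_step[OF assms(3), of x] page_of_step[OF assms(4), of y] by simp
  have bounds: "k * N \<le> spine_pos (x, k)" "spine_pos (x, k) < k * N + N"
    "k * N + N \<le> spine_pos (x, k + 1)" "spine_pos (x, k + 1) < k * N + N + N"
    "k' * N \<le> spine_pos (y, k')" "spine_pos (y, k') < k' * N + N"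
    "k' * N + N \<le> spine_pos (y, k' + 1)" "spine_pos (y, k' + 1) < k' * N + N + N"
    using spine_pos_ge[of k x] spine_pos_ge[of "k + 1" x] spine_pos_less[of x k] spine_pos_less[of x "k + 1"]
      spine_pos_ge[of k' y] spine_pos_ge[of "k' + 1" y] spine_pos_less[of y k'] spine_pos_less[of y "k' + 1"]
      assms(1,2) by (auto simp: algebra_simps)
  show ?thesis
  proof (cases "k = k'")
    case True
    show ?thesis
    proof (cases "x = y")
      case True
      then show ?thesis using \<open>k = k'\<close> not_crossing_self by simp
    next
      case False
      text \<open>Consecutive layers are traversed in opposite directions, so these two edges nest.\<close>
      have flip: "spine_pos (x, k) < spine_pos (y, k) \<longleftrightarrow> spine_pos (y, k + 1) < spine_pos (x, k + 1)"
        "spine_pos (y, k) < spine_pos (x, k) \<longleftrightarrow> spine_pos (x, k + 1) < spine_pos (y, k + 1)"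
        using spine_pos_less_iff[of x y] spine_pos_less_iff[of y x] assms(1,2) by simp_all
      have "spine_pos (x, k) \<noteq> spine_pos (y, k)"
        using spine_pos_less_iff[of x y k] spine_pos_less_iff[of y x k] assms(1,2) False
        by (cases "even k"; cases "x < y") auto
      then consider "spine_pos (x, k) < spine_pos (y, k)" | "spine_pos (y, k) < spine_pos (x, k)"
        by linarith
      then show ?thesis
      proof cases
        case 1
        then show ?thesis using flip bounds unfolding \<open>k = k'\<close> by (intro not_crossing_nested) linarith+
      next
        case 2
        then show ?thesis using flip bounds unfolding \<open>k = k'\<close> by (intro not_crossing_enclosing) linarith+
      qed
    qed
  next
    case False
    then have "k \<noteq> 0" "k' \<noteq> 0" "odd k \<longleftrightarrow> odd k'" using pages assms(1,2) by (auto split: if_splits)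
    then have "k + 2 \<le> k' \<or> k' + 2 \<le> k" using False by presburger
    then show ?thesis
    proof
      assume "k + 2 \<le> k'"
      then have "(k + 1) * N + N \<le> k' * N" using add_le_mult_of_less[of "k + 1" k' N] by simp
      then show ?thesis using bounds by (intro not_crossing_before) (simp_all add: algebra_simps)
    next
      assume "k' + 2 \<le> k"
      then have "(k' + 1) * N + N \<le> k * N" using add_le_mult_of_less[of "k' + 1" k N] by simp
      then show ?thesis using bounds by (intro not_crossing_after) (simp_all add: algebra_simps)
    qed
  qed
qed

lemma step_wrap_no_crossing:
  assumes "x < N" "y < N" "k + 1 < L"
    and "page_of (y, k) (y, k + 1) = page_of (x, 0) (x, L - 1)"
  shows "\<not> crossing (spine_pos (y, k)) (spine_pos (y, k + 1)) (spine_pos (x, 0)) (spine_pos (x, L - 1))"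
proof -
  have page: "(if k = 0 then y + 1 else if odd k then 0 else N + 1) = x + 2"
    using assms(4) page_of_step[OF assms(3), of y] page_of_wrap[of x] by simp
  have bounds: "k * N \<le> spine_pos (y, k)" "spine_pos (y, k) < k * N + N"
    "k * N + N \<le> spine_pos (y, k + 1)" "spine_pos (y, k + 1) < k * N + N + N"
    using spine_pos_ge[of k y] spine_pos_ge[of "k + 1" y] spine_pos_less[of y k] spine_pos_less[of y "k + 1"]
      assms(2) by (auto simp: algebra_simps)
  note ends = spine_pos_first_layer[of x] spine_pos_last_layer[of x]
  show ?thesis
  proof (cases "k = 0")
    case True
    text \<open>Here y = x + 1, so the wrap edge of x encloses the edge (y, 0)(y, 1).\<close>
    then have "y = x + 1" using page by simp
    moreover have "spine_pos (y, 1) + y + 1 = N + N" using spine_pos_odd[of 1 y] assms(2) by simp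
    moreover have "N + N \<le> (L - 1) * N" using add_le_mult_of_less[of 1 "L - 1" N] L_ge_3 by simp
    ultimately show ?thesis using True ends spine_pos_first_layer[of y] assms(2)
      by (intro not_crossing_enclosing) simp_all
  next
    case False
    then have "even k" "x + 2 = N + 1" using page by (auto split: if_splits)
    then have "k + 1 \<noteq> L - 1" using odd_L L_ge_3 by presburger
    then have "k + 1 < L - 1" using assms(3) by linarith
    then have "k * N + N + N \<le> (L - 1) * N" using add_le_mult_of_less[of "k + 1" "L - 1" N] by simp
    moreover have "N \<le> k * N" using add_le_mult_of_less[of 0 k N] False by simp
    ultimately show ?thesis using bounds ends assms(1) by (intro not_crossing_enclosing) linarith+
  qed
qed

lemma wrap_wrap_no_crossing:
  assumes "page_of (x, 0) (x, L - 1) = page_of (y, 0) (y, L - 1)"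
  shows "\<not> crossing (spine_pos (x, 0)) (spine_pos (x, L - 1)) (spine_pos (y, 0)) (spine_pos (y, L - 1))"
  using assms page_of_wrap not_crossing_self by simp

definition canonical_edge :: "nat \<times> nat \<Rightarrow> nat \<times> nat \<Rightarrow> bool" where
  "canonical_edge a b \<longleftrightarrow>
     (\<exists>u w j. a = (u, j) \<and> b = (w, j) \<and> u < N \<and> w < N \<and> u \<noteq> w \<and> j < L) \<or>
     (\<exists>x k. a = (x, k) \<and> b = (x, k + 1) \<and> x < N \<and> k + 1 < L) \<or>
     (\<exists>x. a = (x, 0) \<and> b = (x, L - 1) \<and> x < N)"

lemma canonical_edgeE:
  assumes "canonical_edge a b"
  obtains (clique) u w j where "a = (u, j)" "b = (w, j)" "u < N" "w < N" "u \<noteq> w" "j < L"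
    | (step) x k where "a = (x, k)" "b = (x, k + 1)" "x < N" "k + 1 < L"
    | (wrap) x where "a = (x, 0)" "b = (x, L - 1)" "x < N"
  using assms unfolding canonical_edge_def by blast

lemma adj_imp_canonical_edge:
  assumes "adj a b"
  shows "canonical_edge a b \<or> canonical_edge b a"
proof -
  obtain u j w k where ab: "a = (u, j)" "b = (w, k)" by (cases a; cases b)
  have A: "u < N" "w < N" "j < L" "k < L"
    "j = k \<and> u \<noteq> w \<or> u = w \<and> (k = (j + 1) mod L \<or> j = (k + 1) mod L)"
    using assms ab by auto
  consider "j = k" "u \<noteq> w" | "u = w" "k = (j + 1) mod L" | "u = w" "j = (k + 1) mod L"
    using A(5) by blast
  then show ?thesis
  proof cases
    case 1
    then show ?thesis using A ab unfolding canonical_edge_def by blast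
  next
    case 2
    then have "k = j + 1 \<and> j + 1 < L \<or> k = 0 \<and> j = L - 1"
      using add1_mod_L[OF A(3)] A(3) by (auto split: if_splits)
    then show ?thesis using A ab 2 unfolding canonical_edge_def by auto
  next
    case 3
    then have "j = k + 1 \<and> k + 1 < L \<or> j = 0 \<and> k = L - 1"
      using add1_mod_L[OF A(4)] A(4) by (auto split: if_splits)
    then show ?thesis using A ab 3 unfolding canonical_edge_def by auto
  qed
qed

lemma canonical_edges_no_crossing:
  assumes "canonical_edge a b" "canonical_edge c d" "page_of a b = page_of c d"
  shows "\<not> crossing (spine_pos a) (spine_pos b) (spine_pos c) (spine_pos d)"
proof -
  have sym: "\<not> crossing (spine_pos a) (spine_pos b) (spine_pos c) (spine_pos d)"
    if "\<not> crossing (spine_pos c) (spine_pos d) (spine_pos a) (spine_pos b)"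
    using that crossing_commute by blast
  from assms(1) show ?thesis
  proof (cases rule: canonical_edgeE)
    case (clique u w j)
    from assms(2) show ?thesis
    proof (cases rule: canonical_edgeE)
      case clique': (clique u' w' j')
      show ?thesis using clique_clique_no_crossing assms(3) clique clique' by simp
    next
      case step': (step x' k')
      show ?thesis using clique_step_no_crossing assms(3) clique step' by simp
    next
      case wrap': (wrap x')
      show ?thesis using clique_wrap_no_crossing assms(3) clique wrap' by simp
    qed
  next
    case (step x k)
    from assms(2) show ?thesis
    proof (cases rule: canonical_edgeE)
      case clique': (clique u' w' j')
      show ?thesis using sym clique_step_no_crossing assms(3) step clique' by simp
    next
      case step': (step x' k')
      show ?thesis using step_step_no_crossing assms(3) step step' by simp
    next
      case wrap': (wrap x')
      show ?thesis using step_wrap_no_crossing assms(3) step wrap' by simp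
    qed
  next
    case (wrap x)
    from assms(2) show ?thesis
    proof (cases rule: canonical_edgeE)
      case clique': (clique u' w' j')
      show ?thesis using sym clique_wrap_no_crossing assms(3) wrap clique' by simp
    next
      case step': (step x' k')
      show ?thesis using sym step_wrap_no_crossing assms(3) wrap step' by simp
    next
      case wrap': (wrap x')
      show ?thesis using wrap_wrap_no_crossing assms(3) wrap wrap' by simp
    qed
  qed
qed

lemma no_crossing_on_same_page:
  assumes "adj a b" "adj c d" "page_of a b = page_of c d"
  shows "\<not> crossing (spine_pos a) (spine_pos b) (spine_pos c) (spine_pos d)"
proof -
  have "canonical_edge a b \<or> canonical_edge b a" "canonical_edge c d \<or> canonical_edge d c"
    using adj_imp_canonical_edge assms(1,2) by blast+
  then show ?thesis
    using canonical_edges_no_crossing assms(3) page_of_commute crossing_swap_left crossing_swap_right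
    by metis
qed

lemma matching_book_embedding_KC: "matching_book_embedding KC (N + 2) spine_pos edge_page"
  unfolding matching_book_embedding_def
proof (intro conjI ballI allI impI)
  show "inj_on spine_pos (verts KC)" by (rule inj_on_spine_pos)
next
  fix e assume "e \<in> edges KC"
  then obtain a b where "e = {a, b}" "adj a b" using edges_KC_iff by blast
  then show "edge_page e < N + 2" using edge_page_eq page_of_less by simp
next
  fix u v x y
  assume "{u, v} \<in> edges KC" "{x, y} \<in> edges KC" "edge_page {u, v} = edge_page {x, y}"
  then have "\<not> crossing (spine_pos u) (spine_pos v) (spine_pos x) (spine_pos y)"
    using no_crossing_on_same_page by (simp add: doubleton_in_edges_KC_iff edge_page_eq)
  then show "\<not> (spine_pos u < spine_pos x \<and> spine_pos x < spine_pos v \<and> spine_pos v < spine_pos y)"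
    unfolding crossing_def by blast
next
  fix e f assume e: "e \<in> edges KC" and f: "f \<in> edges KC" and "e \<noteq> f" "edge_page e = edge_page f"
  show "e \<inter> f = {}"
  proof (rule ccontr)
    assume "e \<inter> f \<noteq> {}"
    then obtain z where "e \<in> {e \<in> edges KC. z \<in> e}" "f \<in> {e \<in> edges KC. z \<in> e}"
      using e f by auto
    then obtain p q where pq: "e = {z, p}" "adj z p" "f = {z, q}" "adj z q"
      unfolding incident_edges_KC by auto
    then have "page_of z p \<noteq> page_of z q" using \<open>e \<noteq> f\<close> page_of_inj_at_vertex by blast
    then show False using \<open>edge_page e = edge_page f\<close> pq(1,3) edge_page_eq by simp
  qed
qed

lemma mbt_KC: "mbt KC = N + 2"
  unfolding mbt_def
proof (rule Least_equality)
  show "\<exists>ord page. matching_book_embedding KC (N + 2) ord page"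
    using matching_book_embedding_KC by blast
qed (use matching_book_embedding_KC_pages_ge in blast)

end

theorem lemma2p4:
  fixes n m :: nat
  assumes "n \<ge> 2" and "m \<ge> 1"
  shows "mbt (cart_prod (complete_graph (2 * n)) (cycle_graph (2 * m + 1)))
           = max_degree (cart_prod (complete_graph (2 * n)) (cycle_graph (2 * m + 1))) + 1
       \<and> max_degree (cart_prod (complete_graph (2 * n)) (cycle_graph (2 * m + 1))) + 1
           = 2 * n + 2"
proof -
  interpret odd_complete_cycle_product "2 * n" "2 * m + 1"
    by unfold_locales (use assms in auto)
  show ?thesis using mbt_KC max_degree_KC unfolding KC_def by simp
qed

end
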